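(* Let $\Omega\subset\mathbb{R}^2$ be open and bounded with Lipschitz boundary, let $f\in L^\infty(\Omega)$, $\lambda_1,\lambda_2>0$, and let $$\mathcal{A}=\{u\in L^1(\Omega):\ \log u\in L^1(\Omega)\},\qquad \mathcal{B}=\{v\in L^2(\Omega):\ v\le f \text{ a.e.}\}.$$ Let $u\in BV(\Omega)\cap\mathcal{A}$. Then the minimisation problem $$\inf_{v\in L^2(\Omega)\cap\mathcal{B}}\Big\{\frac{\lambda_1}{2}\|v\|_{L^2(\Omega)}^2+\lambda_2\, D_{KL}(f-v,u)\Big\}$$ admits a minimiser, and this minimiser is unique.
   Context: For nonnegative $\varphi,\psi\in L^1(\Omega)$ the Kullback–Leibler functional is $D_{KL}(\varphi,\psi)=\int_\Omega\big(\psi-\varphi+\varphi\log(\varphi/\psi)\big)\,dx\in[0,+\infty]$, with the convention $0\log 0=0$. Note that $u\in\mathcal{A}$ forces $u\ge 0$ a.e. (so that $\log u$ is defined). $BV(\Omega)$ denotes the space of functions of bounded variation. *)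

theory Defs
  imports "HOL-Analysis.Analysis"
begin

definition Lp2 :: "(real^2) set \<Rightarrow> (real^2 \<Rightarrow> real) \<Rightarrow> bool" where
  "Lp2 \<Omega> v \<longleftrightarrow> v \<in> borel_measurable (lebesgue_on \<Omega>) \<and> integrable (lebesgue_on \<Omega>) (\<lambda>x. (v x)^2)"

definition Linfty :: "(real^2) set \<Rightarrow> (real^2 \<Rightarrow> real) \<Rightarrow> bool" where
  "Linfty \<Omega> f \<longleftrightarrow> f \<in> borel_measurable (lebesgue_on \<Omega>) \<and> (\<exists>C. AE x in lebesgue_on \<Omega>. \<bar>f x\<bar> \<le> C)"

definition lipschitz_boundary :: "(real^2) set \<Rightarrow> bool" where
  "lipschitz_boundary \<Omega> \<longleftrightarrow>
    (\<forall>p\<in>frontier \<Omega>. \<exists>r>0. \<exists>R g L. orthogonal_transformation (R :: real^2 \<Rightarrow> real^2) \<and> L-lipschitz_on UNIV (g :: real \<Rightarrow> real) \<and>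
        (\<forall>x\<in>ball p r. x \<in> \<Omega> \<longleftrightarrow> (R x) $ 2 < g ((R x) $ 1)))"

definition test_field :: "(real^2) set \<Rightarrow> (real^2 \<Rightarrow> real^2) \<Rightarrow> (real^2 \<Rightarrow> real^2^2) \<Rightarrow> bool" where
  "test_field \<Omega> \<phi> D \<longleftrightarrow>
     (\<forall>x. (\<phi> has_derivative (\<lambda>h. D x *v h)) (at x)) \<and> continuous_on UNIV D \<and>
     compact (closure {x. \<phi> x \<noteq> 0}) \<and> closure {x. \<phi> x \<noteq> 0} \<subseteq> \<Omega> \<and> (\<forall>x. norm (\<phi> x) \<le> 1)"

definition divergence :: "(real^2 \<Rightarrow> real^2^2) \<Rightarrow> real^2 \<Rightarrow> real" where
  "divergence D x = (\<Sum>i\<in>UNIV. D x $ i $ i)"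

definition total_variation :: "(real^2) set \<Rightarrow> (real^2 \<Rightarrow> real) \<Rightarrow> ereal" where
  "total_variation \<Omega> u =
     (SUP (\<phi>, D)\<in>{(\<phi>, D). test_field \<Omega> \<phi> D}.
        ereal (integral\<^sup>L (lebesgue_on \<Omega>) (\<lambda>x. u x * divergence D x)))"

definition BV :: "(real^2) set \<Rightarrow> (real^2 \<Rightarrow> real) \<Rightarrow> bool" where
  "BV \<Omega> u \<longleftrightarrow> integrable (lebesgue_on \<Omega>) u \<and> total_variation \<Omega> u < \<infinity>"

text \<open>The class A: u in L^1, u > 0 a.e. (so log u is defined), log u in L^1.\<close>
definition A_class :: "(real^2) set \<Rightarrow> (real^2 \<Rightarrow> real) \<Rightarrow> bool" where
  "A_class \<Omega> u \<longleftrightarrow> integrable (lebesgue_on \<Omega>) u \<and> (AE x in lebesgue_on \<Omega>. u x > 0)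
      \<and> integrable (lebesgue_on \<Omega>) (\<lambda>x. ln (u x))"

definition B_class :: "(real^2) set \<Rightarrow> (real^2 \<Rightarrow> real) \<Rightarrow> (real^2 \<Rightarrow> real) \<Rightarrow> bool" where
  "B_class \<Omega> f v \<longleftrightarrow> Lp2 \<Omega> v \<and> (AE x in lebesgue_on \<Omega>. v x \<le> f x)"

text \<open>Pointwise KL integrand for nonnegative a (= phi) and b (= psi), with 0 log 0 = 0
  and value +infinity when a > 0 = b.\<close>
definition kl_pt :: "real \<Rightarrow> real \<Rightarrow> ennreal" where
  "kl_pt a b = (if a = 0 then ennreal b else if b = 0 then \<infinity>
                else ennreal (b - a + a * ln (a / b)))"

definition D_KL :: "(real^2) set \<Rightarrow> (real^2 \<Rightarrow> real) \<Rightarrow> (real^2 \<Rightarrow> real) \<Rightarrow> ennreal" where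
  "D_KL \<Omega> \<phi> \<psi> = (\<integral>\<^sup>+ x. kl_pt (\<phi> x) (\<psi> x) \<partial>lebesgue_on \<Omega>)"

definition objective :: "(real^2) set \<Rightarrow> (real^2 \<Rightarrow> real) \<Rightarrow> (real^2 \<Rightarrow> real) \<Rightarrow> real \<Rightarrow> real
     \<Rightarrow> (real^2 \<Rightarrow> real) \<Rightarrow> ennreal" where
  "objective \<Omega> f u lam1 lam2 v =
     ennreal (lam1 / 2 * integral\<^sup>L (lebesgue_on \<Omega>) (\<lambda>x. (v x)^2))
     + ennreal lam2 * D_KL \<Omega> (\<lambda>x. f x - v x) u"

end

theory Submission
  imports Defs
begin

text \<open>The objective is the integral of the pointwise energy
  \<open>e(t) = \<lambda>\<^sub>1/2 t\<^sup>2 + \<lambda>\<^sub>2 KL(a - t, b)\<close>, \<open>t \<le> a\<close>, with \<open>a = f(x)\<close>, \<open>b = u(x) > 0\<close>.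
  This energy is \<open>\<lambda>\<^sub>1\<close>-strongly convex, and its minimiser is \<open>t\<^sup>* = a - s\<close> where \<open>s > 0\<close> solves
  the optimality condition \<open>\<lambda>\<^sub>1 s + \<lambda>\<^sub>2 ln s = \<lambda>\<^sub>1 a + \<lambda>\<^sub>2 ln b\<close>. Hence
  \<open>e(t\<^sup>*) + \<lambda>\<^sub>1/2 (t - t\<^sup>*)\<^sup>2 \<le> e(t)\<close> pointwise, and integrating shows that \<open>v\<^sup>* = t\<^sup>*(x)\<close> minimises
  the objective with quadratic growth, which gives uniqueness once the minimum is finite.
  Finiteness only needs \<open>f\<close> bounded, \<open>u\<close> integrable and \<open>\<Omega>\<close> of finite measure.\<close>

definition kl_real :: "real \<Rightarrow> real \<Rightarrow> real" where
  "kl_real s b = (if s = 0 then b else b - s + s * ln (s / b))"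

lemma kl_pt_eq_kl_real: "s \<ge> 0 \<Longrightarrow> b > 0 \<Longrightarrow> kl_pt s b = ennreal (kl_real s b)"
  by (simp add: kl_pt_def kl_real_def)

lemma kl_real_supporting_line:
  assumes b: "b > 0" and s0: "s0 > 0" and s: "s \<ge> 0"
  shows "kl_real s0 b + ln (s0 / b) * (s - s0) \<le> kl_real s b"
proof (cases "s = 0")
  case True
  then show ?thesis using s0 b by (simp add: kl_real_def algebra_simps)
next
  case False
  hence sp: "s > 0" using s by simp
  have "s - s0 = - s * (s0 / s - 1)" using sp by (simp add: field_simps)
  also have "\<dots> \<le> - s * ln (s0 / s)"
    using ln_le_minus_one[of "s0 / s"] s0 sp by (simp add: mult_left_mono)
  also have "\<dots> = s * (ln (s / b) - ln (s0 / b))" using sp s0 b by (simp add: ln_div algebra_simps)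
  finally show ?thesis using False s0 by (simp add: kl_real_def algebra_simps)
qed

lemma kl_real_nonneg: "b > 0 \<Longrightarrow> s \<ge> 0 \<Longrightarrow> kl_real s b \<ge> 0"
  using kl_real_supporting_line[of b b s] by (simp add: kl_real_def)

lemma affine_plus_ln_less:
  fixes l1 l2 s t :: real
  assumes "l1 > 0" "l2 > 0" "0 < s" "s < t"
  shows "l1 * s + l2 * ln s < l1 * t + l2 * ln t"
  using assms by (intro add_strict_mono) simp_all

lemma ex1_affine_plus_ln_eq:
  fixes l1 l2 y :: real
  assumes l1: "l1 > 0" and l2: "l2 > 0"
  shows "\<exists>!s. 0 < s \<and> l1 * s + l2 * ln s = y"
proof (rule ex_ex1I)
  define s1 where "s1 = min 1 (exp ((y - l1) / l2 - 1))"
  define s2 where "s2 = max 1 (y / l1 + 1)"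
  have s1: "0 < s1" "s1 \<le> s2" unfolding s1_def s2_def by simp_all
  have "s1 \<le> exp ((y - l1) / l2 - 1)" unfolding s1_def by simp
  from ln_mono[OF this s1(1)] have "ln s1 \<le> (y - l1) / l2 - 1" by simp
  hence "l2 * ln s1 \<le> y - l1 - l2" using l2 by (simp add: field_simps)
  moreover have "l1 * s1 \<le> l1" unfolding s1_def using l1 by simp
  ultimately have lo: "l1 * s1 + l2 * ln s1 \<le> y" using l2 by simp
  have "y < l1 * (y / l1 + 1)" using l1 by (simp add: field_simps)
  also have "\<dots> \<le> l1 * s2" unfolding s2_def using l1 by (simp add: mult_left_mono)
  moreover have "0 \<le> l2 * ln s2" unfolding s2_def using l2 by simp
  ultimately have hi: "y \<le> l1 * s2 + l2 * ln s2" by linarith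
  have "\<forall>x. s1 \<le> x \<and> x \<le> s2 \<longrightarrow> isCont (\<lambda>s. l1 * s + l2 * ln s) x"
    using s1 by (auto intro!: continuous_intros)
  from IVT[OF lo hi s1(2) this] s1(1)
  show "\<exists>s. 0 < s \<and> l1 * s + l2 * ln s = y" by (blast intro: less_le_trans)
next
  fix s t assume "0 < s \<and> l1 * s + l2 * ln s = y" "0 < t \<and> l1 * t + l2 * ln t = y"
  then show "s = t"
    using affine_plus_ln_less[OF l1 l2, of s t] affine_plus_ln_less[OF l1 l2, of t s]
    by (cases s t rule: linorder_cases) auto
qed

definition affine_plus_ln_inv :: "real \<Rightarrow> real \<Rightarrow> real \<Rightarrow> real" where
  "affine_plus_ln_inv l1 l2 y = (THE s. 0 < s \<and> l1 * s + l2 * ln s = y)"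

lemma affine_plus_ln_inv:
  assumes "l1 > 0" "l2 > 0"
  shows "affine_plus_ln_inv l1 l2 y > 0"
    and "l1 * affine_plus_ln_inv l1 l2 y + l2 * ln (affine_plus_ln_inv l1 l2 y) = y"
  using theI'[OF ex1_affine_plus_ln_eq[OF assms, of y]]
  unfolding affine_plus_ln_inv_def by simp_all

lemma mono_affine_plus_ln_inv:
  assumes l1: "l1 > 0" and l2: "l2 > 0"
  shows "mono (affine_plus_ln_inv l1 l2)"
proof (rule monoI, rule ccontr)
  fix x y :: real assume "x \<le> y" "\<not> affine_plus_ln_inv l1 l2 x \<le> affine_plus_ln_inv l1 l2 y"
  with affine_plus_ln_less[OF l1 l2 affine_plus_ln_inv(1)[OF l1 l2, of y], of "affine_plus_ln_inv l1 l2 x"]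
    affine_plus_ln_inv(2)[OF l1 l2, of x] affine_plus_ln_inv(2)[OF l1 l2, of y]
  show False by linarith
qed

lemma borel_measurable_affine_plus_ln_inv:
  "l1 > 0 \<Longrightarrow> l2 > 0 \<Longrightarrow> affine_plus_ln_inv l1 l2 \<in> borel_measurable borel"
  by (rule borel_measurable_mono) (rule mono_affine_plus_ln_inv)

lemma borel_measurable_kl_pt[measurable]:
  assumes [measurable]: "f \<in> borel_measurable M" "g \<in> borel_measurable M"
  shows "(\<lambda>x. kl_pt (f x) (g x)) \<in> borel_measurable M"
  unfolding kl_pt_def by measurable

definition pointwise_energy :: "real \<Rightarrow> real \<Rightarrow> real \<Rightarrow> real \<Rightarrow> real \<Rightarrow> ennreal" where
  "pointwise_energy l1 l2 a b t = ennreal (l1 / 2 * t\<^sup>2) + ennreal l2 * kl_pt (a - t) b"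

definition pointwise_argmin :: "real \<Rightarrow> real \<Rightarrow> real \<Rightarrow> real \<Rightarrow> real" where
  "pointwise_argmin l1 l2 a b = a - affine_plus_ln_inv l1 l2 (l1 * a + l2 * ln b)"

lemma pointwise_argmin_le: "l1 > 0 \<Longrightarrow> l2 > 0 \<Longrightarrow> pointwise_argmin l1 l2 a b \<le> a"
  by (simp add: pointwise_argmin_def affine_plus_ln_inv(1) less_imp_le)

lemma borel_measurable_pointwise_argmin:
  assumes "l1 > 0" "l2 > 0" and [measurable]: "f \<in> borel_measurable M" "u \<in> borel_measurable M"
  shows "(\<lambda>x. pointwise_argmin l1 l2 (f x) (u x)) \<in> borel_measurable M"
proof -
  have [measurable]: "affine_plus_ln_inv l1 l2 \<in> borel_measurable borel"
    using assms(1,2) by (rule borel_measurable_affine_plus_ln_inv)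
  show ?thesis unfolding pointwise_argmin_def by measurable
qed

lemma pointwise_energy_eq:
  assumes "l1 > 0" "l2 > 0" "b > 0" "t \<le> a"
  shows "pointwise_energy l1 l2 a b t = ennreal (l1 / 2 * t\<^sup>2 + l2 * kl_real (a - t) b)"
  using assms kl_real_nonneg[of b "a - t"]
  by (simp add: pointwise_energy_def kl_pt_eq_kl_real ennreal_plus ennreal_mult)

lemma pointwise_energy_real_quadratic_growth:
  assumes l1: "l1 > 0" and l2: "l2 > 0" and b: "b > 0" and t: "t \<le> a"
  defines "t0 \<equiv> pointwise_argmin l1 l2 a b"
  shows "l1 / 2 * t0\<^sup>2 + l2 * kl_real (a - t0) b + l1 / 2 * (t - t0)\<^sup>2
           \<le> l1 / 2 * t\<^sup>2 + l2 * kl_real (a - t) b"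
proof -
  define s0 where "s0 = affine_plus_ln_inv l1 l2 (l1 * a + l2 * ln b)"
  have s0: "s0 > 0" "l1 * s0 + l2 * ln s0 = l1 * a + l2 * ln b"
    using affine_plus_ln_inv[OF l1 l2] unfolding s0_def by auto
  have t0: "t0 = a - s0" unfolding t0_def s0_def pointwise_argmin_def ..
  \<comment> \<open>the optimality condition identifies the slope of the supporting line at \<open>s0\<close>\<close>
  have "l1 * t0 = l1 * a - l1 * s0" by (simp add: t0 right_diff_distrib)
  hence slope: "l2 * ln (s0 / b) = l1 * t0" using s0 b by (simp add: ln_div right_diff_distrib)
  have "a - t - s0 = t0 - t" using t0 by simp
  hence "kl_real s0 b + ln (s0 / b) * (t0 - t) \<le> kl_real (a - t) b"
    using kl_real_supporting_line[OF b s0(1), of "a - t"] t by (simp only: diff_ge_0_iff_ge)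
  from mult_left_mono[OF this, of l2] l2
  have "l2 * kl_real s0 b + l1 * t0 * (t0 - t) \<le> l2 * kl_real (a - t) b"
    unfolding distrib_left mult.assoc[symmetric] slope by simp
  moreover have "l1 / 2 * t\<^sup>2 = l1 / 2 * t0\<^sup>2 + l1 * t0 * (t - t0) + l1 / 2 * (t - t0)\<^sup>2"
    by (simp add: power2_eq_square algebra_simps)
  moreover have "l1 * t0 * (t0 - t) = - (l1 * t0 * (t - t0))" by (simp add: algebra_simps)
  moreover have "kl_real (a - t0) b = kl_real s0 b" using t0 by simp
  ultimately show ?thesis by (smt (verit))
qed

lemma pointwise_energy_quadratic_growth:
  assumes l1: "l1 > 0" and l2: "l2 > 0" and b: "b > 0" and t: "t \<le> a"
  defines "t0 \<equiv> pointwise_argmin l1 l2 a b"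
  shows "pointwise_energy l1 l2 a b t0 + ennreal (l1 / 2 * (t - t0)\<^sup>2) \<le> pointwise_energy l1 l2 a b t"
proof -
  have t0a: "t0 \<le> a" unfolding t0_def using pointwise_argmin_le[OF l1 l2] .
  have "pointwise_energy l1 l2 a b t0 + ennreal (l1 / 2 * (t - t0)\<^sup>2)
      = ennreal (l1 / 2 * t0\<^sup>2 + l2 * kl_real (a - t0) b + l1 / 2 * (t - t0)\<^sup>2)"
    using pointwise_energy_eq[OF l1 l2 b t0a] l1 l2 b kl_real_nonneg[of b "a - t0"] t0a
    by (simp add: ennreal_plus)
  also have "\<dots> \<le> pointwise_energy l1 l2 a b t"
    unfolding pointwise_energy_eq[OF l1 l2 b t] t0_def
    by (rule ennreal_leI) (rule pointwise_energy_real_quadratic_growth[OF l1 l2 b t])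
  finally show ?thesis .
qed

lemma pointwise_energy_argmin_bound:
  assumes l1: "l1 > 0" and l2: "l2 > 0" and b: "b > 0" and a: "\<bar>a\<bar> \<le> C"
  shows "pointwise_energy l1 l2 a b (pointwise_argmin l1 l2 a b)
           \<le> ennreal (l1 / 2 * (C + 1)\<^sup>2) + ennreal l2 * ennreal b"
proof -
  \<comment> \<open>compare with the competitor \<open>t = a - min b 1\<close>, whose KL term is at most \<open>b\<close>\<close>
  define c where "c = min b 1"
  have c: "0 < c" "c \<le> 1" unfolding c_def using b by auto
  have "a - c \<le> a" using c by simp
  from pointwise_energy_quadratic_growth[OF l1 l2 b this]
  have "pointwise_energy l1 l2 a b (pointwise_argmin l1 l2 a b) \<le> pointwise_energy l1 l2 a b (a - c)"
    by (meson add_increasing2 order_trans zero_le order_refl)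
  also have "\<dots> \<le> ennreal (l1 / 2 * (C + 1)\<^sup>2) + ennreal l2 * ennreal b"
    unfolding pointwise_energy_def
  proof (rule add_mono)
    have "\<bar>a - c\<bar> \<le> \<bar>C + 1\<bar>" using a c by linarith
    then show "ennreal (l1 / 2 * (a - c)\<^sup>2) \<le> ennreal (l1 / 2 * (C + 1)\<^sup>2)"
      using l1 by (intro ennreal_leI mult_left_mono) (simp_all add: abs_le_square_iff)
    have "kl_real c b \<le> b"
    proof (cases "b \<le> 1")
      case True
      then show ?thesis using b by (simp add: c_def kl_real_def)
    next
      case False
      then have "kl_real c b = b - 1 + ln (1 / b)" by (simp add: c_def kl_real_def)
      moreover have "ln (1 / b) \<le> 0" using False by simp
      ultimately show ?thesis by linarith
    qed
    then show "ennreal l2 * kl_pt (a - (a - c)) b \<le> ennreal l2 * ennreal b"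
      using c b by (intro mult_left_mono) (simp_all add: kl_pt_eq_kl_real ennreal_leI)
  qed
  finally show ?thesis .
qed

lemma objective_eq_nn_integral:
  assumes l1: "lam1 > 0"
    and [measurable]: "f \<in> borel_measurable (lebesgue_on \<Omega>)" "u \<in> borel_measurable (lebesgue_on \<Omega>)"
    and g: "Lp2 \<Omega> g"
  shows "objective \<Omega> f u lam1 lam2 g
           = (\<integral>\<^sup>+ x. pointwise_energy lam1 lam2 (f x) (u x) (g x) \<partial>lebesgue_on \<Omega>)"
proof -
  let ?M = "lebesgue_on \<Omega>"
  have [measurable]: "g \<in> borel_measurable ?M" and gi: "integrable ?M (\<lambda>x. (g x)\<^sup>2)"
    using g by (auto simp: Lp2_def)
  have "ennreal (lam1 / 2 * integral\<^sup>L ?M (\<lambda>x. (g x)\<^sup>2)) = (\<integral>\<^sup>+ x. ennreal (lam1 / 2 * (g x)\<^sup>2) \<partial>?M)"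
    using gi l1 by (subst nn_integral_eq_integral) auto
  moreover have "ennreal lam2 * D_KL \<Omega> (\<lambda>x. f x - g x) u
                   = (\<integral>\<^sup>+ x. ennreal lam2 * kl_pt (f x - g x) (u x) \<partial>?M)"
    unfolding D_KL_def by (rule nn_integral_cmult[symmetric]) measurable
  ultimately show ?thesis
    unfolding objective_def pointwise_energy_def by (simp add: nn_integral_add)
qed

lemma AE_eq_of_quadratic_gap:
  fixes g h :: "'a \<Rightarrow> real" and a b :: ennreal
  assumes c: "c > 0" and [measurable]: "g \<in> borel_measurable M" "h \<in> borel_measurable M"
    and gap: "a + (\<integral>\<^sup>+ x. ennreal (c * (h x - g x)\<^sup>2) \<partial>M) \<le> b"
    and "b \<le> a" and "a < \<infinity>"
  shows "AE x in M. h x = g x"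
proof -
  have "a + (\<integral>\<^sup>+ x. ennreal (c * (h x - g x)\<^sup>2) \<partial>M) \<le> a + 0"
    using order_trans[OF gap \<open>b \<le> a\<close>] by (simp only: add_0_right)
  then have "(\<integral>\<^sup>+ x. ennreal (c * (h x - g x)\<^sup>2) \<partial>M) = 0"
    using \<open>a < \<infinity>\<close> by (auto simp: ennreal_add_left_cancel_le)
  then have "AE x in M. ennreal (c * (h x - g x)\<^sup>2) = 0"
    by (subst (asm) nn_integral_0_iff_AE) measurable
  then show ?thesis
    by eventually_elim (use c in \<open>simp add: ennreal_eq_0_iff mult_le_0_iff\<close>)
qed

lemma nn_integral_pointwise_energy_argmin_finite:
  assumes l1: "l1 > 0" and l2: "l2 > 0" and \<Omega>: "\<Omega> \<in> lmeasurable"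
    and f: "Linfty \<Omega> f" and u: "integrable (lebesgue_on \<Omega>) u" and upos: "AE x in lebesgue_on \<Omega>. u x > 0"
  shows "(\<integral>\<^sup>+ x. pointwise_energy l1 l2 (f x) (u x) (pointwise_argmin l1 l2 (f x) (u x)) \<partial>lebesgue_on \<Omega>) < \<infinity>"
proof -
  let ?M = "lebesgue_on \<Omega>"
  obtain C where C: "AE x in ?M. \<bar>f x\<bar> \<le> C" using f by (auto simp: Linfty_def)
  define K where "K = ennreal (l1 / 2 * (C + 1)\<^sup>2)"
  have [measurable]: "u \<in> borel_measurable ?M" using u by auto
  have "(\<integral>\<^sup>+ x. pointwise_energy l1 l2 (f x) (u x) (pointwise_argmin l1 l2 (f x) (u x)) \<partial>?M)
          \<le> (\<integral>\<^sup>+ x. K + ennreal l2 * ennreal (u x) \<partial>?M)"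
    unfolding K_def
  proof (rule nn_integral_mono_AE)
    show "AE x in ?M. pointwise_energy l1 l2 (f x) (u x) (pointwise_argmin l1 l2 (f x) (u x))
            \<le> ennreal (l1 / 2 * (C + 1)\<^sup>2) + ennreal l2 * ennreal (u x)"
      using upos C by eventually_elim (rule pointwise_energy_argmin_bound[OF l1 l2])
  qed
  also have "\<dots> = K * emeasure ?M (space ?M) + ennreal l2 * (\<integral>\<^sup>+ x. ennreal (u x) \<partial>?M)"
    by (subst nn_integral_add) (auto simp: nn_integral_cmult)
  also have "\<dots> < \<infinity>"
  proof -
    have "emeasure ?M (space ?M) < \<infinity>"
      using finite_measure.emeasure_finite[OF finite_measure_lebesgue_on[OF \<Omega>]]
      by (simp add: top.not_eq_extremum)
    moreover have "(\<integral>\<^sup>+ x. ennreal (u x) \<partial>?M) \<le> (\<integral>\<^sup>+ x. ennreal (norm (u x)) \<partial>?M)"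
      by (intro nn_integral_mono ennreal_leI) simp
    with u have "(\<integral>\<^sup>+ x. ennreal (u x) \<partial>?M) < \<infinity>"
      by (simp add: integrable_iff_bounded)
    ultimately show ?thesis unfolding K_def
      by (simp add: ennreal_mult_less_top ennreal_mult_eq_top_iff)
  qed
  finally show ?thesis .
qed

lemma Lp2_of_nn_integral_pointwise_energy_finite:
  assumes l1: "l1 > 0" and [measurable]: "g \<in> borel_measurable (lebesgue_on \<Omega>)"
    and fin: "(\<integral>\<^sup>+ x. pointwise_energy l1 l2 (f x) (u x) (g x) \<partial>lebesgue_on \<Omega>) < \<infinity>"
  shows "Lp2 \<Omega> g"
proof -
  let ?M = "lebesgue_on \<Omega>"
  have "(\<integral>\<^sup>+ x. ennreal (norm ((g x)\<^sup>2)) \<partial>?M)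
          = ennreal (2 / l1) * (\<integral>\<^sup>+ x. ennreal (l1 / 2 * (g x)\<^sup>2) \<partial>?M)"
    using l1 by (subst nn_integral_cmult[symmetric]) (auto simp: ennreal_mult[symmetric])
  also have "\<dots> \<le> ennreal (2 / l1) * (\<integral>\<^sup>+ x. pointwise_energy l1 l2 (f x) (u x) (g x) \<partial>?M)"
    unfolding pointwise_energy_def by (intro mult_left_mono nn_integral_mono) simp_all
  also have "\<dots> < \<infinity>" using fin by (simp add: ennreal_mult_less_top)
  finally show ?thesis unfolding Lp2_def by (auto intro: integrableI_bounded)
qed

lemma pointwise_argmin_admissible:
  assumes l1: "l1 > 0" and l2: "l2 > 0" and \<Omega>: "\<Omega> \<in> lmeasurable"
    and f: "Linfty \<Omega> f" and u: "integrable (lebesgue_on \<Omega>) u" and upos: "AE x in lebesgue_on \<Omega>. u x > 0"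
  defines "v \<equiv> \<lambda>x. pointwise_argmin l1 l2 (f x) (u x)"
  shows "B_class \<Omega> f v" and "objective \<Omega> f u l1 l2 v < \<infinity>"
proof -
  have [measurable]: "f \<in> borel_measurable (lebesgue_on \<Omega>)" "u \<in> borel_measurable (lebesgue_on \<Omega>)"
    using f u by (auto simp: Linfty_def)
  have [measurable]: "v \<in> borel_measurable (lebesgue_on \<Omega>)"
    unfolding v_def by (rule borel_measurable_pointwise_argmin[OF l1 l2]) measurable
  have fin: "(\<integral>\<^sup>+ x. pointwise_energy l1 l2 (f x) (u x) (v x) \<partial>lebesgue_on \<Omega>) < \<infinity>"
    unfolding v_def using nn_integral_pointwise_energy_argmin_finite[OF l1 l2 \<Omega> f u upos] .
  have "Lp2 \<Omega> v" by (rule Lp2_of_nn_integral_pointwise_energy_finite[OF l1 _ fin]) measurable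
  then show "B_class \<Omega> f v" and "objective \<Omega> f u l1 l2 v < \<infinity>"
    using fin pointwise_argmin_le[OF l1 l2] by (simp_all add: B_class_def v_def objective_eq_nn_integral[OF l1])
qed

lemma objective_quadratic_growth:
  assumes l1: "l1 > 0" and l2: "l2 > 0"
    and [measurable]: "f \<in> borel_measurable (lebesgue_on \<Omega>)" "u \<in> borel_measurable (lebesgue_on \<Omega>)"
    and upos: "AE x in lebesgue_on \<Omega>. u x > 0"
    and v: "Lp2 \<Omega> v" and v_eq: "\<And>x. v x = pointwise_argmin l1 l2 (f x) (u x)"
    and w: "B_class \<Omega> f w"
  shows "objective \<Omega> f u l1 l2 v + (\<integral>\<^sup>+ x. ennreal (l1 / 2 * (w x - v x)\<^sup>2) \<partial>lebesgue_on \<Omega>)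
           \<le> objective \<Omega> f u l1 l2 w"
proof -
  let ?M = "lebesgue_on \<Omega>" and ?E = "\<lambda>g x. pointwise_energy l1 l2 (f x) (u x) (g x)"
  have [measurable]: "v \<in> borel_measurable ?M" "w \<in> borel_measurable ?M"
    using v w by (auto simp: Lp2_def B_class_def)
  have "AE x in ?M. w x \<le> f x" using w by (simp add: B_class_def)
  with upos have "AE x in ?M. ?E v x + ennreal (l1 / 2 * (w x - v x)\<^sup>2) \<le> ?E w x"
    unfolding v_eq by eventually_elim (rule pointwise_energy_quadratic_growth[OF l1 l2])
  then have "(\<integral>\<^sup>+ x. ?E v x \<partial>?M) + (\<integral>\<^sup>+ x. ennreal (l1 / 2 * (w x - v x)\<^sup>2) \<partial>?M)
               \<le> (\<integral>\<^sup>+ x. ?E w x \<partial>?M)"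
    by (subst nn_integral_add[symmetric]) (auto simp: pointwise_energy_def intro: nn_integral_mono_AE)
  then show ?thesis
    using v w by (simp add: objective_eq_nn_integral[OF l1] B_class_def)
qed

theorem proposition2p2:
  fixes \<Omega> :: "(real^2) set" and f u :: "real^2 \<Rightarrow> real" and lam1 lam2 :: real
  assumes "open \<Omega>" and "bounded \<Omega>" and "lipschitz_boundary \<Omega>"
    and "Linfty \<Omega> f" and "lam1 > 0" and "lam2 > 0"
    and "BV \<Omega> u" and "A_class \<Omega> u"
  shows "\<exists>v. B_class \<Omega> f v
            \<and> (\<forall>w. B_class \<Omega> f w \<longrightarrow> objective \<Omega> f u lam1 lam2 v \<le> objective \<Omega> f u lam1 lam2 w)
            \<and> (\<forall>v'. B_class \<Omega> f v'
                 \<and> (\<forall>w. B_class \<Omega> f w \<longrightarrow> objective \<Omega> f u lam1 lam2 v' \<le> objective \<Omega> f u lam1 lam2 w)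
                 \<longrightarrow> (AE x in lebesgue_on \<Omega>. v' x = v x))"
proof -
  note l1 = \<open>lam1 > 0\<close> and l2 = \<open>lam2 > 0\<close>
  let ?obj = "objective \<Omega> f u lam1 lam2"
  define v where "v x = pointwise_argmin lam1 lam2 (f x) (u x)" for x
  have \<Omega>: "\<Omega> \<in> lmeasurable" using assms(1,2) by (simp add: bounded_set_imp_lmeasurable borel_open)
  have u: "integrable (lebesgue_on \<Omega>) u" and upos: "AE x in lebesgue_on \<Omega>. u x > 0"
    using assms(8) by (auto simp: A_class_def)
  have v_B: "B_class \<Omega> f v" and v_fin: "?obj v < \<infinity>"
    using pointwise_argmin_admissible[OF l1 l2 \<Omega> assms(4) u upos] by (simp_all add: v_def[abs_def])
  have growth: "?obj v + (\<integral>\<^sup>+ x. ennreal (lam1 / 2 * (w x - v x)\<^sup>2) \<partial>lebesgue_on \<Omega>) \<le> ?obj w"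
    if "B_class \<Omega> f w" for w
    using objective_quadratic_growth[OF l1 l2 _ _ upos _ v_def that] assms(4) u v_B
    by (auto simp: Linfty_def B_class_def)
  have "?obj v \<le> ?obj w" if "B_class \<Omega> f w" for w
    using growth[OF that] by (rule order_trans[OF add_increasing2[OF zero_le order_refl]])
  moreover have "AE x in lebesgue_on \<Omega>. w x = v x" if "B_class \<Omega> f w" "?obj w \<le> ?obj v" for w
    using AE_eq_of_quadratic_gap[OF _ _ _ growth[OF that(1)] that(2) v_fin] l1 that(1) v_B
    by (simp add: B_class_def Lp2_def)
  ultimately show ?thesis using v_B by blast
qed

end
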